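(* Let $Q$ be a right Leibniz algebra, $L$ a subalgebra of $Q$, and $q\in Q$. (1) If $Q$ is an algebra of quotients of $L$, then $(L:q)$ is an essential ideal of $L$ and $\mathrm{Ann}_L((L:q))=\{0\}$. (2) If $Q$ is ideally absorbed into $L$, then $(L:q)$ is an essential ideal of $L$ and $\mathrm{Ann}_L((L:q))=\{0\}$.
   Context: A right Leibniz algebra satisfies $[x,[y,z]]=[[x,y],z]-[[x,z],y]$. Ideals: subspaces $I$ with $[I,L]\subseteq I$, $[L,I]\subseteq I$; an ideal is essential if it meets every nonzero ideal nontrivially. $\mathrm{Ann}_L(H)=\{x\in L:[x,y]=[y,x]=0\ \forall y\in H\}$. For $x\in L$, $R_x(u)=[u,x]$, $L_x(u)=[x,u]$ on $Q$, $\mathscr{A}(L)$ the associative algebra they generate, ${}_L(q)=\mathbb{F}q+\{\sum\xi_i(q):\xi_i\in\mathscr{A}(L)\}$, $(L:q)=\{x\in L:[x,{}_L(q)]\subseteq L,[{}_L(q),x]\subseteq L\}$. $Q$ is an algebra of quotients of $L$ if for all $p,q\in Q$, $p\ne0$, there is $x\in(L:q)$ with $[x,p]\ne0$ or $y\in(L:q)$ with $[p,y]\ne0$. $Q$ is ideally absorbed into $L$ if for each $0\ne q\in Q$ there is an ideal $I$ of $L$ with $\mathrm{Ann}_L(I)=\{0\}$ such that $[I,q]\ne\{0\}$ or $[q,I]\ne\{0\}$, and both $[I,q],[q,I]\subseteq L$. *)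

theory Defs
  imports Main "HOL.Vector_Spaces"
begin

text \<open>The whole algebra Q is UNIV of type 'v.\<close>

definition right_leibniz_algebra ::
  "('k::field \<Rightarrow> 'v::ab_group_add \<Rightarrow> 'v) \<Rightarrow> ('v \<Rightarrow> 'v \<Rightarrow> 'v) \<Rightarrow> bool" where
  "right_leibniz_algebra scale br \<longleftrightarrow>
     vector_space scale \<and>
     (\<forall>x y z. br (x + y) z = br x z + br y z) \<and>
     (\<forall>x y z. br x (y + z) = br x y + br x z) \<and>
     (\<forall>c x y. br (scale c x) y = scale c (br x y)) \<and>
     (\<forall>c x y. br x (scale c y) = scale c (br x y)) \<and>
     (\<forall>x y z. br x (br y z) = br (br x y) z - br (br x z) y)"

definition subalgebra ::
  "('k::field \<Rightarrow> 'v::ab_group_add \<Rightarrow> 'v) \<Rightarrow> ('v \<Rightarrow> 'v \<Rightarrow> 'v) \<Rightarrow> 'v set \<Rightarrow> bool" where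
  "subalgebra scale br L \<longleftrightarrow>
     module.subspace scale L \<and> (\<forall>x\<in>L. \<forall>y\<in>L. br x y \<in> L)"

definition is_ideal ::
  "('k::field \<Rightarrow> 'v::ab_group_add \<Rightarrow> 'v) \<Rightarrow> ('v \<Rightarrow> 'v \<Rightarrow> 'v) \<Rightarrow> 'v set \<Rightarrow> 'v set \<Rightarrow> bool" where
  "is_ideal scale br L I \<longleftrightarrow>
     I \<subseteq> L \<and> module.subspace scale I \<and>
     (\<forall>i\<in>I. \<forall>x\<in>L. br i x \<in> I \<and> br x i \<in> I)"

definition essential_ideal ::
  "('k::field \<Rightarrow> 'v::ab_group_add \<Rightarrow> 'v) \<Rightarrow> ('v \<Rightarrow> 'v \<Rightarrow> 'v) \<Rightarrow> 'v set \<Rightarrow> 'v set \<Rightarrow> bool" where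
  "essential_ideal scale br L I \<longleftrightarrow>
     is_ideal scale br L I \<and>
     (\<forall>J. is_ideal scale br L J \<and> J \<noteq> {0} \<longrightarrow> I \<inter> J \<noteq> {0})"

definition Ann :: "('v::zero \<Rightarrow> 'v \<Rightarrow> 'v) \<Rightarrow> 'v set \<Rightarrow> 'v set \<Rightarrow> 'v set" where
  "Ann br L H = {x \<in> L. \<forall>y\<in>H. br x y = 0 \<and> br y x = 0}"

inductive_set mult_alg ::
  "('k::field \<Rightarrow> 'v::ab_group_add \<Rightarrow> 'v) \<Rightarrow> ('v \<Rightarrow> 'v \<Rightarrow> 'v) \<Rightarrow> 'v set \<Rightarrow> ('v \<Rightarrow> 'v) set"
  for scale br L where
  R_op: "x \<in> L \<Longrightarrow> (\<lambda>u. br u x) \<in> mult_alg scale br L"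
| L_op: "x \<in> L \<Longrightarrow> (\<lambda>u. br x u) \<in> mult_alg scale br L"
| zero_op: "(\<lambda>u. 0) \<in> mult_alg scale br L"
| comp_op: "f \<in> mult_alg scale br L \<Longrightarrow> g \<in> mult_alg scale br L \<Longrightarrow> f \<circ> g \<in> mult_alg scale br L"
| add_op: "f \<in> mult_alg scale br L \<Longrightarrow> g \<in> mult_alg scale br L \<Longrightarrow> (\<lambda>u. f u + g u) \<in> mult_alg scale br L"
| smult_op: "f \<in> mult_alg scale br L \<Longrightarrow> (\<lambda>u. scale c (f u)) \<in> mult_alg scale br L"

definition gen_sub ::
  "('k::field \<Rightarrow> 'v::ab_group_add \<Rightarrow> 'v) \<Rightarrow> ('v \<Rightarrow> 'v \<Rightarrow> 'v) \<Rightarrow> 'v set \<Rightarrow> 'v \<Rightarrow> 'v set" where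
  "gen_sub scale br L q =
     {scale c q + (\<Sum>i<n. \<xi> i q) | c (n::nat) \<xi>. \<forall>i<n. \<xi> i \<in> mult_alg scale br L}"

definition colon ::
  "('k::field \<Rightarrow> 'v::ab_group_add \<Rightarrow> 'v) \<Rightarrow> ('v \<Rightarrow> 'v \<Rightarrow> 'v) \<Rightarrow> 'v set \<Rightarrow> 'v \<Rightarrow> 'v set" where
  "colon scale br L q =
     {x \<in> L. \<forall>u\<in>gen_sub scale br L q. br x u \<in> L \<and> br u x \<in> L}"

definition algebra_of_quotients ::
  "('k::field \<Rightarrow> 'v::ab_group_add \<Rightarrow> 'v) \<Rightarrow> ('v \<Rightarrow> 'v \<Rightarrow> 'v) \<Rightarrow> 'v set \<Rightarrow> bool" where
  "algebra_of_quotients scale br L \<longleftrightarrow>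
     (\<forall>p q. p \<noteq> 0 \<longrightarrow>
        (\<exists>x\<in>colon scale br L q. br x p \<noteq> 0) \<or> (\<exists>y\<in>colon scale br L q. br p y \<noteq> 0))"

definition ideally_absorbed ::
  "('k::field \<Rightarrow> 'v::ab_group_add \<Rightarrow> 'v) \<Rightarrow> ('v \<Rightarrow> 'v \<Rightarrow> 'v) \<Rightarrow> 'v set \<Rightarrow> bool" where
  "ideally_absorbed scale br L \<longleftrightarrow>
     (\<forall>q. q \<noteq> 0 \<longrightarrow>
        (\<exists>I. is_ideal scale br L I \<and> Ann br L I = {0} \<and>
             ((\<lambda>i. br i q) ` I \<noteq> {0} \<or> (\<lambda>i. br q i) ` I \<noteq> {0}) \<and>
             (\<lambda>i. br i q) ` I \<subseteq> L \<and> (\<lambda>i. br q i) ` I \<subseteq> L))"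

end

theory Submission
  imports Defs
begin

text \<open>Call x absorbing for a set U when all brackets of x with members of U, on either
  side, lie in L.  Then (L:q) consists of the elements of L absorbing for the submodule
  generated by q under the multiplication algebra, and the right Leibniz identity shows that
  the absorbing elements of a set stable under bracketing with L are again stable.  Hence
  (L:q) is an ideal; and if q is absorbing for an ideal I, then the absorbing elements for I
  form a stable subspace containing q, so every element of I is absorbing for the submodule
  generated by q, i.e. I \<subseteq> (L:q).  For an algebra of quotients Ann (L:q) = 0 is immediate;
  if Q is ideally absorbed, the ideal with zero annihilator supplied for q (for q = 0: for a
  nonzero element of Ann (L:q)) lies in (L:q).
  Finally an ideal with zero annihilator is essential, since an ideal meeting it trivially
  annihilates it.\<close>

lemma Ann_antimono: "H \<subseteq> K \<Longrightarrow> Ann br L K \<subseteq> Ann br L H"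
  unfolding Ann_def by blast

locale leibniz_subalgebra =
  fixes scale :: "'k::field \<Rightarrow> 'v::ab_group_add \<Rightarrow> 'v"
    and br :: "'v \<Rightarrow> 'v \<Rightarrow> 'v"
    and L :: "'v set"
  assumes right_leibniz: "right_leibniz_algebra scale br"
    and subalgebra: "subalgebra scale br L"
begin

sublocale module scale
  using right_leibniz by (simp add: right_leibniz_algebra_def vector_space_def module_def)

lemma bracket_add_left: "br (x + y) z = br x z + br y z"
  and bracket_add_right: "br x (y + z) = br x y + br x z"
  and bracket_scale_left: "br (scale c x) y = scale c (br x y)"
  and bracket_scale_right: "br x (scale c y) = scale c (br x y)"
  and leibniz: "br x (br y z) = br (br x y) z - br (br x z) y"
  using right_leibniz by (simp_all add: right_leibniz_algebra_def)

lemma subspace_L: "subspace L"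
  and bracket_closed: "x \<in> L \<Longrightarrow> y \<in> L \<Longrightarrow> br x y \<in> L"
  using subalgebra by (simp_all add: subalgebra_def)

lemma bracket_zero_left [simp]: "br 0 y = 0"
  using bracket_add_left[of 0 0 y] by simp

lemma bracket_zero_right [simp]: "br y 0 = 0"
  using bracket_add_right[of y 0 0] by simp

lemma zero_in_Ann: "0 \<in> Ann br L H"
  by (simp add: Ann_def subspace_0[OF subspace_L])

lemma Ann_eq_zeroI: "(\<And>x. x \<in> Ann br L H \<Longrightarrow> x = 0) \<Longrightarrow> Ann br L H = {0}"
  using zero_in_Ann by blast

lemma essential_ideal_if_Ann_eq_zero:
  assumes I: "is_ideal scale br L I" and Ann_I: "Ann br L I = {0}"
  shows "essential_ideal scale br L I"
  unfolding essential_ideal_def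
proof (intro conjI allI impI I)
  fix J assume J: "is_ideal scale br L J \<and> J \<noteq> {0}"
  show "I \<inter> J \<noteq> {0}"
  proof
    assume disjoint: "I \<inter> J = {0}"
    have "J \<subseteq> Ann br L I"
    proof
      fix x assume x: "x \<in> J"
      have x_L: "x \<in> L"
        using J x unfolding is_ideal_def by blast
      have "br x y \<in> I \<inter> J \<and> br y x \<in> I \<inter> J" if y: "y \<in> I" for y
      proof -
        have "y \<in> L"
          using I y unfolding is_ideal_def by blast
        then show ?thesis
          using I J x x_L y unfolding is_ideal_def by blast
      qed
      with disjoint x_L show "x \<in> Ann br L I"
        unfolding Ann_def by blast
    qed
    with Ann_I have "J \<subseteq> {0}"
      by simp
    with J show False
      using subspace_0 unfolding is_ideal_def by blast
  qed
qed

lemma module_hom_mult_alg: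
  assumes "\<xi> \<in> mult_alg scale br L"
  shows "module_hom scale scale \<xi>"
  using assms
proof induction
  case (R_op x)
  show ?case
    by (simp add: module_hom_iff module_axioms bracket_add_left bracket_scale_left)
next
  case (L_op x)
  show ?case
    by (simp add: module_hom_iff module_axioms bracket_add_right bracket_scale_right)
next
  case zero_op
  show ?case
    by (simp add: module_hom_iff module_axioms)
next
  case (comp_op f g)
  then show ?case
    using module_hom_compose by blast
next
  case (add_op f g)
  then show ?case
    by (simp add: module_hom_iff scale_right_distrib algebra_simps)
next
  case (smult_op f c)
  then show ?case
    by (simp add: module_hom_iff scale_right_distrib mult.commute)
qed

definition L_stable :: "'v set \<Rightarrow> bool" where
  "L_stable U \<longleftrightarrow> (\<forall>y\<in>L. \<forall>u\<in>U. br y u \<in> U \<and> br u y \<in> U)"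

lemma L_stable_if_is_ideal: "is_ideal scale br L I \<Longrightarrow> L_stable I"
  unfolding is_ideal_def L_stable_def by blast

lemma mult_alg_closed:
  assumes "subspace S" "L_stable S" "\<xi> \<in> mult_alg scale br L" "u \<in> S"
  shows "\<xi> u \<in> S"
  using assms(3,4)
proof (induction arbitrary: u)
  case (comp_op f g)
  then show ?case by simp
qed (use assms(1,2) in \<open>auto simp: L_stable_def subspace_0 subspace_add subspace_scale\<close>)

lemma gen_sub_subset:
  assumes "subspace S" "L_stable S" "q \<in> S"
  shows "gen_sub scale br L q \<subseteq> S"
  unfolding gen_sub_def
  using assms mult_alg_closed by (auto intro!: subspace_add subspace_scale subspace_sum)

lemma gen_sub_closed:
  assumes \<psi>: "\<psi> \<in> mult_alg scale br L" and u: "u \<in> gen_sub scale br L q"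
  shows "\<psi> u \<in> gen_sub scale br L q"
proof -
  obtain c n \<xi> where u_eq: "u = scale c q + (\<Sum>i<(n::nat). \<xi> i q)"
    and \<xi>: "\<forall>i<n. \<xi> i \<in> mult_alg scale br L"
    using u unfolding gen_sub_def by blast
  interpret \<psi>: module_hom scale scale \<psi>
    using \<psi> by (rule module_hom_mult_alg)
  \<comment> \<open>c \<psi>(q) is absorbed into the sum, since \<lambda>u. c \<psi>(u) lies in A(L)\<close>
  define \<eta> where "\<eta> i = (if i < n then \<psi> \<circ> \<xi> i else (\<lambda>u. scale c (\<psi> u)))" for i
  have \<eta>: "\<forall>i<Suc n. \<eta> i \<in> mult_alg scale br L"
    using \<xi> \<psi> by (auto simp: \<eta>_def intro: mult_alg.intros)
  have "\<psi> u = scale 0 q + (\<Sum>i<Suc n. \<eta> i q)"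
    by (simp add: u_eq \<psi>.add \<psi>.scale \<psi>.sum \<eta>_def add.commute)
  with \<eta> show ?thesis
    unfolding gen_sub_def by blast
qed

lemma L_stable_gen_sub: "L_stable (gen_sub scale br L q)"
  unfolding L_stable_def
  using gen_sub_closed[OF mult_alg.L_op] gen_sub_closed[OF mult_alg.R_op] by blast

definition absorbers :: "'v set \<Rightarrow> 'v set" where
  "absorbers U = {x. \<forall>u\<in>U. br x u \<in> L \<and> br u x \<in> L}"

lemma absorbers_swap: "A \<subseteq> absorbers B \<longleftrightarrow> B \<subseteq> absorbers A"
  unfolding absorbers_def by blast

lemma subspace_absorbers: "subspace (absorbers U)"
  using subspace_L
  by (auto simp: absorbers_def bracket_add_left bracket_add_right bracket_scale_left
      bracket_scale_right subspace_0 subspace_add subspace_scale intro!: subspaceI)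

lemma L_stable_absorbers:
  assumes U: "L_stable U"
  shows "L_stable (absorbers U)"
  unfolding L_stable_def
proof (intro ballI)
  fix y x assume y: "y \<in> L" and x: "x \<in> absorbers U"
  have "br (br x y) u \<in> L \<and> br u (br x y) \<in> L \<and> br (br y x) u \<in> L \<and> br u (br y x) \<in> L"
    if u: "u \<in> U" for u
  proof -
    have xu: "br x u \<in> L" "br u x \<in> L"
      using x u unfolding absorbers_def by blast+
    have "br y u \<in> U" "br u y \<in> U"
      using U y u unfolding L_stable_def by blast+
    then have x_yu: "br x (br y u) \<in> L" "br (br y u) x \<in> L"
      and x_uy: "br x (br u y) \<in> L" "br (br u y) x \<in> L"
      using x unfolding absorbers_def by blast+
    have "br (br x y) u = br x (br y u) + br (br x u) y"
      and "br u (br x y) = br (br u x) y - br (br u y) x"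
      and "br (br y x) u = br y (br x u) + br (br y u) x"
      and "br u (br y x) = br (br u y) x - br (br u x) y"
      by (simp_all add: leibniz)
    with xu x_yu x_uy y show ?thesis
      using subspace_L by (simp add: bracket_closed subspace_add subspace_diff)
  qed
  then show "br y x \<in> absorbers U \<and> br x y \<in> absorbers U"
    unfolding absorbers_def by blast
qed

lemma colon_eq: "colon scale br L q = L \<inter> absorbers (gen_sub scale br L q)"
  unfolding colon_def absorbers_def by blast

lemma is_ideal_colon: "is_ideal scale br L (colon scale br L q)"
  using L_stable_absorbers[OF L_stable_gen_sub, of q]
  unfolding is_ideal_def colon_eq L_stable_def
  by (auto simp: bracket_closed subspace_inter subspace_L subspace_absorbers)

lemma ideal_subset_colon:
  assumes I: "is_ideal scale br L I" and q: "q \<in> absorbers I"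
  shows "I \<subseteq> colon scale br L q"
proof -
  have "gen_sub scale br L q \<subseteq> absorbers I"
    using gen_sub_subset subspace_absorbers L_stable_absorbers[OF L_stable_if_is_ideal[OF I]] q
    by blast
  then have "I \<subseteq> absorbers (gen_sub scale br L q)"
    by (simp add: absorbers_swap)
  with I show ?thesis
    unfolding colon_eq is_ideal_def by blast
qed

lemma Ann_colon_eq_zero_if_ideal:
  assumes "is_ideal scale br L I" "Ann br L I = {0}" "q \<in> absorbers I"
  shows "Ann br L (colon scale br L q) = {0}"
  using Ann_antimono[OF ideal_subset_colon[OF assms(1,3)]] assms(2) zero_in_Ann by blast

lemma Ann_colon_eq_zero_if_algebra_of_quotients:
  assumes "algebra_of_quotients scale br L"
  shows "Ann br L (colon scale br L q) = {0}"
proof (rule Ann_eq_zeroI, rule ccontr)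
  fix x assume "x \<in> Ann br L (colon scale br L q)" "x \<noteq> 0"
  with assms show False
    unfolding algebra_of_quotients_def Ann_def by blast
qed

lemma absorbing_ideal_if_ideally_absorbed:
  fixes v :: 'v
  assumes absorbed: "ideally_absorbed scale br L" and "v \<noteq> 0"
  obtains I where "is_ideal scale br L I" "Ann br L I = {0}" "q \<in> absorbers I"
proof (cases "q = 0")
  case True
  from absorbed \<open>v \<noteq> 0\<close> obtain I where "is_ideal scale br L I" "Ann br L I = {0}"
    unfolding ideally_absorbed_def by blast
  moreover have "q \<in> absorbers I"
    using True subspace_absorbers subspace_0 by blast
  ultimately show ?thesis
    using that by blast
next
  case False
  with absorbed obtain I where "is_ideal scale br L I" "Ann br L I = {0}"
    "(\<lambda>i. br i q) ` I \<subseteq> L" "(\<lambda>i. br q i) ` I \<subseteq> L"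
    unfolding ideally_absorbed_def by meson
  moreover from this(3,4) have "q \<in> absorbers I"
    unfolding absorbers_def by blast
  ultimately show ?thesis
    using that by blast
qed

lemma Ann_colon_eq_zero_if_ideally_absorbed:
  assumes "ideally_absorbed scale br L"
  shows "Ann br L (colon scale br L q) = {0}"
proof (rule Ann_eq_zeroI, rule ccontr)
  fix x assume x: "x \<in> Ann br L (colon scale br L q)" "x \<noteq> 0"
  obtain I where "is_ideal scale br L I" "Ann br L I = {0}" "q \<in> absorbers I"
    using absorbing_ideal_if_ideally_absorbed[OF assms x(2)] .
  with x show False
    using Ann_colon_eq_zero_if_ideal by blast
qed

end

theorem proposition3p8:
  fixes scale :: "'k::field \<Rightarrow> 'v::ab_group_add \<Rightarrow> 'v"
    and br :: "'v \<Rightarrow> 'v \<Rightarrow> 'v"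
    and L :: "'v set" and q :: 'v
  assumes "right_leibniz_algebra scale br"
    and "subalgebra scale br L"
  shows "(algebra_of_quotients scale br L \<longrightarrow>
            essential_ideal scale br L (colon scale br L q) \<and> Ann br L (colon scale br L q) = {0})
       \<and> (ideally_absorbed scale br L \<longrightarrow>
            essential_ideal scale br L (colon scale br L q) \<and> Ann br L (colon scale br L q) = {0})"
proof -
  interpret leibniz_subalgebra scale br L
    using assms by (rule leibniz_subalgebra.intro)
  have "essential_ideal scale br L (colon scale br L q) \<and> Ann br L (colon scale br L q) = {0}"
    if "Ann br L (colon scale br L q) = {0}"
    using essential_ideal_if_Ann_eq_zero[OF is_ideal_colon that] that ..
  then show ?thesis
    using Ann_colon_eq_zero_if_algebra_of_quotients Ann_colon_eq_zero_if_ideally_absorbed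
    by simp
qed

end
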